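(* In the discrete setting of the context, let $\varphi$ be a twice continuously differentiable convex function on $(0,+\infty)$, let $(\rho_K^n)$ be positive, and let the normal face velocities be $u_{K,\sigma}^n={\boldsymbol u}_\sigma^n\cdot{\boldsymbol n}_{K,\sigma}$ for a discrete face velocity field $({\boldsymbol u}_\sigma^n)$. For $K\in\mathcal M$, $0\le n\le N-1$, let $\tilde\rho_K^{n+1/2}\in|\hspace{-0.12em}[\rho_K^n,\rho_K^{n+1}]\hspace{-0.12em}|$ satisfy $\varphi'(\rho_K^{n+1})-\varphi'(\rho_K^n)=\varphi''(\tilde\rho_K^{n+1/2})(\rho_K^{n+1}-\rho_K^n)$, and define \[ |K|\,(R_{01})_K^{n+1}=\varphi''(\tilde\rho_K^{n+1/2})(\rho_K^{n+1}-\rho_K^n)\,\rho_K^n\sum_{\sigma\in\mathcal{E}(K)}|\sigma|\,u_{K,\sigma}^n. \] Let $M>1$ and suppose $\rho_K^n\le M$ and $1/\rho_K^n\le M$ for all $K$ and $0\le n\le N$; let $|\varphi''|_\infty$ be the maximum of $\varphi''$ on $[1/M,M]$. Then for any $p\ge1$, $q\ge1$ with $1/p+1/q=1$, \[ \|R_{01}\|_{L^1}\le C\,C_{\mathcal M}\,M^{(2p-1)/p}\,|\varphi''|_\infty\,\|\rho\|_{t,BV}^{1/p}\,\|{\boldsymbol u}\|_{L^q(0,T;W^{1,q}_{\mathcal M})}\,\delta t^{1/p}, \] where $C>0$ depends only on the maximal number of faces of the mesh cells.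
   Context: Setting: $\Omega\subset\mathbb{R}^d$ bounded, $\mathcal M$ a polytopal mesh with cells $K$ (with a bounded number of faces), faces of $K$ denoted $\mathcal E(K)$, measures $|K|$, $|\sigma|$, $h_K={\rm diam}(K)$, ${\boldsymbol n}_{K,\sigma}$ the unit normal to $\sigma$ outward $K$; uniform time step $\delta t$, $0\le n\le N$. Notation $|\hspace{-0.12em}[a,b]\hspace{-0.12em}|=[\min(a,b),\max(a,b)]$. $\|R\|_{L^1}=\sum_{n=0}^{N-1}\delta t\sum_K|K|\,|R_K^{n+1}|$. $\|z\|_{t,BV}=\sum_n\sum_K|K|\,|z_K^{n+1}-z_K^n|$. For a face velocity field with components $u_{\sigma,i}^n$, \[ \|{\boldsymbol u}\|^q_{L^q(0,T;W^{1,q}_{\mathcal M})}=\sum_{i=1}^d\sum_{n=0}^N\delta t\sum_{K\in\mathcal M}\sum_{(\sigma,\sigma')\in\mathcal{E}(K)^2}|K|\Bigl|\frac{u_{\sigma,i}^n-u_{\sigma',i}^n}{h_K}\Bigr|^q, \] and $C_{\mathcal M}=\max_{K\in\mathcal M,(\sigma,\sigma')\in\mathcal{E}(K)^2}\frac{(|\sigma|+|\sigma'|)h_K}{|K|}$. *)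

theory Defs
  imports "HOL-Analysis.Analysis"
begin

text \<open>Abstract polytopal mesh: cells and faces are indexed by natural numbers.
  cells: set of cells; E K: faces of cell K; volK K = |K|; volS s = |sigma|;
  h K = h_K; nrm K s = unit normal to s outward K; u s n = face velocity u_s^n.\<close>

text \<open>(R01)_K^{n+1}, stored at index n.\<close>
definition R01 ::
  "(nat \<Rightarrow> nat set) \<Rightarrow> (nat \<Rightarrow> real) \<Rightarrow> (nat \<Rightarrow> real) \<Rightarrow> (nat \<Rightarrow> nat \<Rightarrow> 'a::euclidean_space)
   \<Rightarrow> (nat \<Rightarrow> nat \<Rightarrow> 'a) \<Rightarrow> (real \<Rightarrow> real) \<Rightarrow> (nat \<Rightarrow> nat \<Rightarrow> real) \<Rightarrow> (nat \<Rightarrow> nat \<Rightarrow> real)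
   \<Rightarrow> nat \<Rightarrow> nat \<Rightarrow> real" where
  "R01 E volK volS nrm u phi2 rho rt K n =
     phi2 (rt K n) * (rho K (Suc n) - rho K n) * rho K n
       * (\<Sum>s\<in>E K. volS s * (u s n \<bullet> nrm K s)) / volK K"

text \<open>L1 norm; R K n denotes the value R_K^{n+1}.\<close>
definition L1norm :: "nat \<Rightarrow> real \<Rightarrow> nat set \<Rightarrow> (nat \<Rightarrow> real) \<Rightarrow> (nat \<Rightarrow> nat \<Rightarrow> real) \<Rightarrow> real" where
  "L1norm N dt cells volK R = (\<Sum>n<N. dt * (\<Sum>K\<in>cells. volK K * \<bar>R K n\<bar>))"

definition tBV :: "nat \<Rightarrow> nat set \<Rightarrow> (nat \<Rightarrow> real) \<Rightarrow> (nat \<Rightarrow> nat \<Rightarrow> real) \<Rightarrow> real" where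
  "tBV N cells volK z = (\<Sum>n<N. \<Sum>K\<in>cells. volK K * \<bar>z K (Suc n) - z K n\<bar>)"

text \<open>q-th power of the discrete L^q(0,T;W^{1,q}) norm; components via the Basis.\<close>
definition W1q_pow ::
  "real \<Rightarrow> nat \<Rightarrow> real \<Rightarrow> nat set \<Rightarrow> (nat \<Rightarrow> nat set) \<Rightarrow> (nat \<Rightarrow> real) \<Rightarrow> (nat \<Rightarrow> real)
   \<Rightarrow> (nat \<Rightarrow> nat \<Rightarrow> 'a::euclidean_space) \<Rightarrow> real" where
  "W1q_pow q N dt cells E volK h u =
     (\<Sum>i\<in>Basis. \<Sum>n\<in>{0..N}. dt * (\<Sum>K\<in>cells. \<Sum>(s, s')\<in>E K \<times> E K.
        volK K * \<bar>((u s n - u s' n) \<bullet> i) / h K\<bar> powr q))"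

definition CM :: "nat set \<Rightarrow> (nat \<Rightarrow> nat set) \<Rightarrow> (nat \<Rightarrow> real) \<Rightarrow> (nat \<Rightarrow> real) \<Rightarrow> (nat \<Rightarrow> real) \<Rightarrow> real" where
  "CM cells E volK volS h =
     Max {(volS s + volS s') * h K / volK K | K s s'. K \<in> cells \<and> s \<in> E K \<and> s' \<in> E K}"

definition phi2inf :: "real \<Rightarrow> (real \<Rightarrow> real) \<Rightarrow> real" where
  "phi2inf M phi2 = Sup (phi2 ` {1/M..M})"

end

theory Submission
  imports Defs
begin

(* Since the weighted outward normals of a closed cell sum to zero, the flux of u through K
   only sees differences u_sigma - u_sigma' of face velocities, so |K| |R_K| is bounded by
   |phi''|_inf M C_M |K| |rho_K^(n+1) - rho_K^n| times a sum of difference quotients.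
   Hoelder's inequality over (n, K, sigma, i), weighted by dt |K|, separates the two factors;
   |rho_K^(n+1) - rho_K^n|^p <= M^(p-1) |rho_K^(n+1) - rho_K^n| turns the first into the BV
   norm, and the second is part of the discrete W^(1,q) norm. *)

lemma sum_weighted_Holder:
  fixes w f g :: "'i \<Rightarrow> real"
  assumes I: "finite I"
    and nonneg: "\<And>j. j \<in> I \<Longrightarrow> 0 \<le> w j" "\<And>j. j \<in> I \<Longrightarrow> 0 \<le> f j"
      "\<And>j. j \<in> I \<Longrightarrow> 0 \<le> g j"
    and p: "p > 1" and q: "q > 1" and pq: "1/p + 1/q = 1"
  shows "(\<Sum>j\<in>I. w j * f j * g j)
    \<le> (\<Sum>j\<in>I. w j * f j powr p) powr (1/p) * (\<Sum>j\<in>I. w j * g j powr q) powr (1/q)"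
proof -
  define A where "A = (\<Sum>j\<in>I. w j * f j powr p)"
  define B where "B = (\<Sum>j\<in>I. w j * g j powr q)"
  have terms_nonneg:
      "\<And>j. j \<in> I \<Longrightarrow> 0 \<le> w j * f j powr p" "\<And>j. j \<in> I \<Longrightarrow> 0 \<le> w j * g j powr q"
    using nonneg by simp_all
  show ?thesis
  proof (cases "A = 0 \<or> B = 0")
    case True
    then have "(\<forall>j\<in>I. w j * f j powr p = 0) \<or> (\<forall>j\<in>I. w j * g j powr q = 0)"
      using sum_nonneg_eq_0_iff[OF I terms_nonneg(1)] sum_nonneg_eq_0_iff[OF I terms_nonneg(2)]
      unfolding A_def B_def by simp
    then have "\<forall>j\<in>I. w j * f j * g j = 0"
      by auto
    then have "(\<Sum>j\<in>I. w j * f j * g j) = 0"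
      by (rule sum.neutral)
    then show ?thesis
      by simp
  next
    case False
    have "0 \<le> A" "0 \<le> B"
      unfolding A_def B_def using terms_nonneg by (simp_all add: sum_nonneg)
    with False have A: "A > 0" and B: "B > 0"
      by auto
    define a where "a = A powr (1/p)"
    define b where "b = B powr (1/q)"
    have ab: "a > 0" "b > 0"
      unfolding a_def b_def using A B by simp_all
    have Young: "w j * (f j / a) * (g j / b) \<le> w j * f j powr p / A / p + w j * g j powr q / B / q"
      if j: "j \<in> I" for j
    proof -
      have "(f j / a) * (g j / b) \<le> (f j / a) powr p / p + (g j / b) powr q / q"
        using p q pq nonneg j ab by (intro Youngs_inequality) simp_all
      also have "(f j / a) powr p = f j powr p / A"
        using nonneg j ab A p by (simp add: powr_divide a_def powr_powr)
      also have "(g j / b) powr q = g j powr q / B"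
        using nonneg j ab B q by (simp add: powr_divide b_def powr_powr)
      finally have "(f j / a) * (g j / b) \<le> f j powr p / A / p + g j powr q / B / q" .
      from mult_left_mono[OF this nonneg(1)[OF j]] show ?thesis
        by (simp add: distrib_left)
    qed
    have "(\<Sum>j\<in>I. w j * f j * g j) / (a * b) = (\<Sum>j\<in>I. w j * (f j / a) * (g j / b))"
      unfolding sum_divide_distrib by (intro sum.cong refl) simp
    also have "\<dots> \<le> (\<Sum>j\<in>I. w j * f j powr p / A / p + w j * g j powr q / B / q)"
      using Young by (rule sum_mono)
    also have "\<dots> = A / A / p + B / B / q"
      unfolding sum.distrib sum_divide_distrib[symmetric] A_def B_def ..
    also have "\<dots> = 1"
      using A B pq by simp
    finally have "(\<Sum>j\<in>I. w j * f j * g j) \<le> a * b"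
      using ab by (simp add: pos_divide_le_eq)
    then show ?thesis
      by (simp add: a_def b_def A_def B_def)
  qed
qed

lemma sum_nested_eq_Sigma:
  assumes "finite A" "finite B" "\<And>b. b \<in> B \<Longrightarrow> finite (C b)" "finite D"
  shows "(\<Sum>a\<in>A. \<Sum>b\<in>B. \<Sum>c\<in>C b. \<Sum>d\<in>D. f a b c d)
    = (\<Sum>(a, b, c, d)\<in>(SIGMA a:A. SIGMA b:B. C b \<times> D). f a b c d)"
  using assms by (simp add: sum.Sigma sum.cartesian_product split_def finite_SigmaI)

lemma convex_on_deriv_mono_on:
  fixes f :: "real \<Rightarrow> real"
  assumes convex: "convex_on A f" and A: "open A" "is_interval A"
    and deriv: "\<And>x. x \<in> A \<Longrightarrow> (f has_real_derivative f' x) (at x)"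
  shows "mono_on A f'"
proof (rule mono_onI)
  have tangent: "f' c * (x - c) \<le> f x - f c" if "x \<in> A" "c \<in> A" for x c
    using that A deriv[of c]
    by (intro convex_on_imp_above_tangent[OF convex])
       (auto simp: interior_open is_interval_connected intro: has_field_derivative_at_within)
  fix x y assume "x \<in> A" "y \<in> A" "x \<le> y"
  then have "0 \<le> (f' y - f' x) * (y - x)"
    using tangent[of x y] tangent[of y x] by (simp add: algebra_simps)
  then show "f' x \<le> f' y"
    using \<open>x \<le> y\<close> by (cases "x = y") (auto simp: zero_le_mult_iff)
qed

lemma convex_on_second_deriv_nonneg:
  fixes f :: "real \<Rightarrow> real"
  assumes "convex_on A f" "open A" "is_interval A"
    and "\<And>x. x \<in> A \<Longrightarrow> (f has_real_derivative f' x) (at x)"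
    and "\<And>x. x \<in> A \<Longrightarrow> (f' has_real_derivative f'' x) (at x)"
    and "x \<in> A"
  shows "0 \<le> f'' x"
  using assms by (intro mono_on_imp_deriv_nonneg[OF convex_on_deriv_mono_on]) (auto simp: interior_open)

lemma continuous_on_compact_le_Sup:
  fixes g :: "'b::topological_space \<Rightarrow> real"
  assumes "compact S" "continuous_on S g" "x \<in> S"
  shows "g x \<le> Sup (g ` S)"
  using assms by (intro cSup_upper bounded_imp_bdd_above compact_imp_bounded compact_continuous_image) auto

lemma abs_second_deriv_le_phi2inf:
  fixes f f' f'' :: "real \<Rightarrow> real"
  assumes "convex_on {0<..} f"
    and "\<And>x. 0 < x \<Longrightarrow> (f has_real_derivative f' x) (at x)"
    and "\<And>x. 0 < x \<Longrightarrow> (f' has_real_derivative f'' x) (at x)"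
    and cont: "continuous_on {0<..} f''" and M: "0 < M" and x: "x \<in> {1/M..M}"
  shows "\<bar>f'' x\<bar> \<le> phi2inf M f''"
proof -
  have "0 < 1/M" using M by simp
  then have interval_pos: "{1/M..M} \<subseteq> {0<..}"
    by (metis atLeastAtMost_iff greaterThan_iff less_le_trans subsetI)
  then have "0 \<le> f'' x"
    using assms by (intro convex_on_second_deriv_nonneg[where A="{0<..}" and f=f and f'=f'])
       (auto simp: is_interval_ci)
  moreover have "f'' x \<le> phi2inf M f''"
    unfolding phi2inf_def using x
    by (intro continuous_on_compact_le_Sup continuous_on_subset[OF cont interval_pos]) auto
  ultimately show ?thesis by simp
qed

lemma abs_powr_le_bound:
  fixes x M p :: real
  assumes "\<bar>x\<bar> \<le> M" "1 \<le> p"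
  shows "\<bar>x\<bar> powr p \<le> M powr (p - 1) * \<bar>x\<bar>"
proof (cases "x = 0")
  case False
  have "\<bar>x\<bar> powr p = \<bar>x\<bar> powr ((p - 1) + 1)" by simp
  also have "\<dots> = \<bar>x\<bar> powr (p - 1) * \<bar>x\<bar>"
    using False powr_add[of "\<bar>x\<bar>" "p - 1" 1] by simp
  also have "\<dots> \<le> M powr (p - 1) * \<bar>x\<bar>"
    using assms by (intro mult_right_mono powr_mono2) auto
  finally show ?thesis .
qed (use assms in simp)

locale polytopal_mesh =
  fixes cells :: "nat set" and E :: "nat \<Rightarrow> nat set" and volK volS h :: "nat \<Rightarrow> real"
    and nrm :: "nat \<Rightarrow> nat \<Rightarrow> 'a::euclidean_space"
  assumes finite_cells: "finite cells" and cells_nonempty: "cells \<noteq> {}"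
    and finite_faces: "K \<in> cells \<Longrightarrow> finite (E K)"
    and faces_nonempty: "K \<in> cells \<Longrightarrow> E K \<noteq> {}"
    and cell_measure_pos: "K \<in> cells \<Longrightarrow> 0 < volK K"
    and diameter_pos: "K \<in> cells \<Longrightarrow> 0 < h K"
    and face_measure_pos: "K \<in> cells \<Longrightarrow> s \<in> E K \<Longrightarrow> 0 < volS s"
    and normal_unit: "K \<in> cells \<Longrightarrow> s \<in> E K \<Longrightarrow> norm (nrm K s) = 1"
    and weighted_normals_sum_zero: "K \<in> cells \<Longrightarrow> (\<Sum>s\<in>E K. volS s *\<^sub>R nrm K s) = 0"
begin

abbreviation C_M :: real where "C_M \<equiv> CM cells E volK volS h"

definition ref_face :: "nat \<Rightarrow> nat" where "ref_face K = (SOME s. s \<in> E K)"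

lemma ref_face_in_faces: "K \<in> cells \<Longrightarrow> ref_face K \<in> E K"
  unfolding ref_face_def using faces_nonempty by (simp add: some_in_eq)

lemma face_measure_le_CM:
  assumes K: "K \<in> cells" and s: "s \<in> E K"
  shows "volS s \<le> C_M * volK K / h K"
proof -
  define S where "S = {(volS s + volS s') * h K / volK K | K s s'. K \<in> cells \<and> s \<in> E K \<and> s' \<in> E K}"
  have "S = (\<lambda>(K, s, s'). (volS s + volS s') * h K / volK K) ` (SIGMA K:cells. E K \<times> E K)"
    unfolding S_def by (auto intro: image_eqI[where x="(K, s, s')" for K s s'])
  then have "finite S"
    using finite_cells finite_faces by auto
  moreover have "(volS s + volS s) * h K / volK K \<in> S"
    unfolding S_def using K s by blast
  ultimately have "(volS s + volS s) * h K / volK K \<le> C_M"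
    unfolding CM_def S_def[symmetric] by (rule Max_ge)
  moreover have "volS s * h K / volK K \<le> (volS s + volS s) * h K / volK K"
    using K s face_measure_pos diameter_pos cell_measure_pos
    by (intro divide_right_mono mult_right_mono) (auto intro: less_imp_le)
  ultimately have "volS s * h K / volK K \<le> C_M"
    by linarith
  then have "volS s * h K \<le> C_M * volK K"
    using pos_divide_le_eq[OF cell_measure_pos[OF K]] by blast
  then show ?thesis
    using pos_le_divide_eq[OF diameter_pos[OF K]] by blast
qed

lemma CM_pos: "0 < C_M"
proof -
  obtain K where K: "K \<in> cells" using cells_nonempty by blast
  then have "0 < C_M * volK K / h K"
    using face_measure_pos face_measure_le_CM ref_face_in_faces by (meson order.strict_trans2)
  then have "0 < C_M * volK K"
    using diameter_pos[OF K] by (simp add: zero_less_divide_iff)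
  then show ?thesis
    using K cell_measure_pos zero_less_mult_pos2 by blast
qed

lemma flux_relative:
  assumes "K \<in> cells"
  shows "(\<Sum>s\<in>E K. volS s * (v s \<bullet> nrm K s)) = (\<Sum>s\<in>E K. volS s * ((v s - c) \<bullet> nrm K s))"
proof -
  have "(\<Sum>s\<in>E K. volS s * (c \<bullet> nrm K s)) = c \<bullet> (\<Sum>s\<in>E K. volS s *\<^sub>R nrm K s)"
    by (simp add: inner_sum_right)
  then have "(\<Sum>s\<in>E K. volS s * (c \<bullet> nrm K s)) = 0"
    using weighted_normals_sum_zero[OF assms] by simp
  then show ?thesis
    by (simp add: inner_diff_left right_diff_distrib sum_subtractf)
qed

lemma abs_flux_le:
  assumes K: "K \<in> cells" and s': "s' \<in> E K"
  shows "\<bar>\<Sum>s\<in>E K. volS s * (v s \<bullet> nrm K s)\<bar>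
    \<le> C_M * volK K * (\<Sum>s\<in>E K. \<Sum>i\<in>Basis. \<bar>((v s - v s') \<bullet> i) / h K\<bar>)"
proof -
  have "\<bar>volS s * ((v s - v s') \<bullet> nrm K s)\<bar>
      \<le> C_M * volK K * (\<Sum>i\<in>Basis. \<bar>((v s - v s') \<bullet> i) / h K\<bar>)"
    if s: "s \<in> E K" for s
  proof -
    have "\<bar>(v s - v s') \<bullet> nrm K s\<bar> \<le> norm (v s - v s')"
      using Cauchy_Schwarz_ineq2[of "v s - v s'" "nrm K s"] normal_unit[OF K s] by simp
    also have "\<dots> \<le> (\<Sum>i\<in>Basis. \<bar>(v s - v s') \<bullet> i\<bar>)"
      by (rule norm_le_l1)
    finally have "volS s * \<bar>(v s - v s') \<bullet> nrm K s\<bar>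
        \<le> C_M * volK K / h K * (\<Sum>i\<in>Basis. \<bar>(v s - v s') \<bullet> i\<bar>)"
      using face_measure_le_CM[OF K s] face_measure_pos[OF K s]
      by (intro mult_mono) (auto intro: sum_nonneg)
    then show ?thesis
      using face_measure_pos[OF K s] diameter_pos[OF K]
      by (simp add: abs_mult sum_distrib_left abs_divide sum_divide_distrib)
  qed
  then have "\<bar>\<Sum>s\<in>E K. volS s * ((v s - v s') \<bullet> nrm K s)\<bar>
      \<le> (\<Sum>s\<in>E K. C_M * volK K * (\<Sum>i\<in>Basis. \<bar>((v s - v s') \<bullet> i) / h K\<bar>))"
    by (intro order.trans[OF sum_abs] sum_mono)
  then show ?thesis
    by (simp add: flux_relative[OF K, of v "v s'"] sum_distrib_left)
qed

definition space_time_faces :: "nat \<Rightarrow> (nat \<times> nat \<times> nat \<times> 'a) set" where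
  "space_time_faces N = (SIGMA n:{..<N}. SIGMA K:cells. E K \<times> Basis)"

lemma finite_space_time_faces: "finite (space_time_faces N)"
  unfolding space_time_faces_def using finite_cells finite_faces by (auto intro!: finite_SigmaI)

lemma sum_space_time_faces:
  "(\<Sum>(n, K, s, i)\<in>space_time_faces N. f n K s i)
    = (\<Sum>n<N. \<Sum>K\<in>cells. \<Sum>s\<in>E K. \<Sum>i\<in>Basis. f n K s i)"
  unfolding space_time_faces_def using finite_cells finite_faces by (simp add: sum_nested_eq_Sigma)

(* Difference quotients against a fixed reference face; each is a term of the W^(1,q) norm. *)
definition discrete_grad :: "(nat \<Rightarrow> nat \<Rightarrow> 'a) \<Rightarrow> nat \<Rightarrow> nat \<Rightarrow> nat \<Rightarrow> 'a \<Rightarrow> real" where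
  "discrete_grad u n K s i = ((u s n - u (ref_face K) n) \<bullet> i) / h K"

lemma R01_pointwise_le:
  assumes K: "K \<in> cells" and curvature: "\<bar>phi'' (rt K n)\<bar> \<le> P"
    and rho: "0 < rho K n" "rho K n \<le> M"
  shows "volK K * \<bar>R01 E volK volS nrm u phi'' rho rt K n\<bar>
    \<le> P * M * C_M * (\<Sum>s\<in>E K. \<Sum>i\<in>Basis.
          volK K * \<bar>rho K (Suc n) - rho K n\<bar> * \<bar>discrete_grad u n K s i\<bar>)"
proof -
  define S where "S = (\<Sum>s\<in>E K. volS s * (u s n \<bullet> nrm K s))"
  have "volK K * \<bar>R01 E volK volS nrm u phi'' rho rt K n\<bar>
      = \<bar>phi'' (rt K n)\<bar> * \<bar>rho K (Suc n) - rho K n\<bar> * rho K n * \<bar>S\<bar>"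
    unfolding R01_def S_def using cell_measure_pos[OF K] rho by (simp add: abs_mult abs_divide)
  also have "\<dots> \<le> P * \<bar>rho K (Suc n) - rho K n\<bar> * M
      * (C_M * volK K * (\<Sum>s\<in>E K. \<Sum>i\<in>Basis. \<bar>discrete_grad u n K s i\<bar>))"
    using abs_flux_le[OF K ref_face_in_faces[OF K], of "\<lambda>s. u s n"] curvature rho
    unfolding S_def discrete_grad_def by (intro mult_mono) auto
  also have "\<dots> = P * M * C_M * (\<Sum>s\<in>E K. \<Sum>i\<in>Basis.
      volK K * \<bar>rho K (Suc n) - rho K n\<bar> * \<bar>discrete_grad u n K s i\<bar>)"
    by (simp add: sum_distrib_left mult_ac)
  finally show ?thesis .
qed

lemma L1norm_R01_le_Holder:
  assumes dt: "0 < dt" and P: "0 \<le> P" and M: "0 \<le> M"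
    and p: "p > 1" and q: "q > 1" and pq: "1/p + 1/q = 1"
    and bounds: "\<And>K n. K \<in> cells \<Longrightarrow> n < N \<Longrightarrow> \<bar>phi'' (rt K n)\<bar> \<le> P \<and> 0 < rho K n \<and> rho K n \<le> M"
  shows "L1norm N dt cells volK (R01 E volK volS nrm u phi'' rho rt)
    \<le> P * M * C_M
      * (\<Sum>(n, K, s, i)\<in>space_time_faces N. dt * volK K * \<bar>rho K (Suc n) - rho K n\<bar> powr p) powr (1/p)
      * (\<Sum>(n, K, s, i)\<in>space_time_faces N. dt * volK K * \<bar>discrete_grad u n K s i\<bar> powr q) powr (1/q)"
proof -
  let ?I = "space_time_faces N"
  define w :: "nat \<times> nat \<times> nat \<times> 'a \<Rightarrow> real" where "w = (\<lambda>(n, K, s, i). dt * volK K)"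
  define f :: "nat \<times> nat \<times> nat \<times> 'a \<Rightarrow> real" where "f = (\<lambda>(n, K, s, i). \<bar>rho K (Suc n) - rho K n\<bar>)"
  define g where "g = (\<lambda>(n, K, s, i). \<bar>discrete_grad u n K s i\<bar>)"
  have "L1norm N dt cells volK (R01 E volK volS nrm u phi'' rho rt)
      = (\<Sum>n<N. \<Sum>K\<in>cells. dt * (volK K * \<bar>R01 E volK volS nrm u phi'' rho rt K n\<bar>))"
    by (simp add: L1norm_def sum_distrib_left)
  also have "\<dots> \<le> (\<Sum>n<N. \<Sum>K\<in>cells. dt * (P * M * C_M * (\<Sum>s\<in>E K. \<Sum>i\<in>Basis.
      volK K * \<bar>rho K (Suc n) - rho K n\<bar> * \<bar>discrete_grad u n K s i\<bar>)))"
    using R01_pointwise_le bounds dt by (intro sum_mono mult_left_mono) auto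
  also have "\<dots> = P * M * C_M * (\<Sum>(n, K, s, i)\<in>?I.
      dt * volK K * \<bar>rho K (Suc n) - rho K n\<bar> * \<bar>discrete_grad u n K s i\<bar>)"
    by (simp add: sum_space_time_faces sum_distrib_left mult_ac)
  also have "\<dots> = P * M * C_M * (\<Sum>j\<in>?I. w j * f j * g j)"
    by (simp add: w_def f_def g_def split_def)
  also have "\<dots> \<le> P * M * C_M
      * ((\<Sum>j\<in>?I. w j * f j powr p) powr (1/p) * (\<Sum>j\<in>?I. w j * g j powr q) powr (1/q))"
    using P M CM_pos dt cell_measure_pos p q pq
    by (intro mult_left_mono sum_weighted_Holder finite_space_time_faces)
       (auto simp: space_time_faces_def w_def f_def g_def
          intro!: mult_nonneg_nonneg less_imp_le[OF cell_measure_pos])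
  finally show ?thesis
    by (simp add: w_def f_def g_def split_def mult_ac)
qed

lemma sum_jump_powr_le:
  assumes dt: "0 \<le> dt" and p: "1 \<le> p" and F: "\<And>K. K \<in> cells \<Longrightarrow> card (E K) \<le> F"
    and rho: "\<And>K n. K \<in> cells \<Longrightarrow> n \<le> N \<Longrightarrow> 0 < rho K n \<and> rho K n \<le> M"
  shows "(\<Sum>(n, K, s, i)\<in>space_time_faces N. dt * volK K * \<bar>rho K (Suc n) - rho K n\<bar> powr p)
    \<le> real F * real DIM('a) * M powr (p - 1) * dt * tBV N cells volK rho"
proof -
  have "(\<Sum>(n, K, s, i)\<in>space_time_faces N. dt * volK K * \<bar>rho K (Suc n) - rho K n\<bar> powr p)
      = (\<Sum>n<N. \<Sum>K\<in>cells. real (card (E K)) * real DIM('a) * (dt * volK K * \<bar>rho K (Suc n) - rho K n\<bar> powr p))"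
    by (simp add: sum_space_time_faces mult.assoc)
  also have "\<dots> \<le> (\<Sum>n<N. \<Sum>K\<in>cells.
      real F * real DIM('a) * (dt * volK K * (M powr (p - 1) * \<bar>rho K (Suc n) - rho K n\<bar>)))"
  proof (intro sum_mono mult_mono mult_left_mono)
    fix n K assume "n \<in> {..<N}" "K \<in> cells"
    then show "\<bar>rho K (Suc n) - rho K n\<bar> powr p \<le> M powr (p - 1) * \<bar>rho K (Suc n) - rho K n\<bar>"
      using rho[of K n] rho[of K "Suc n"] p by (intro abs_powr_le_bound) auto
  qed (use F dt less_imp_le[OF cell_measure_pos] in \<open>auto intro!: mult_nonneg_nonneg\<close>)
  also have "\<dots> = real F * real DIM('a) * M powr (p - 1) * dt * tBV N cells volK rho"
    by (simp add: tBV_def sum_distrib_left mult_ac)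
  finally show ?thesis .
qed

lemma sum_discrete_grad_powr_le:
  assumes dt: "0 \<le> dt"
  shows "(\<Sum>(n, K, s, i)\<in>space_time_faces N. dt * volK K * \<bar>discrete_grad u n K s i\<bar> powr q)
    \<le> W1q_pow q N dt cells E volK h u"
proof -
  define G where "G = (\<lambda>n K s s' i. volK K * \<bar>((u s n - u s' n) \<bullet> i) / h K\<bar> powr q)"
  have G_nonneg: "K \<in> cells \<Longrightarrow> 0 \<le> G n K s s' i" for n K s s' i
    unfolding G_def using cell_measure_pos by (simp add: less_imp_le)
  have "(\<Sum>(n, K, s, i)\<in>space_time_faces N. dt * volK K * \<bar>discrete_grad u n K s i\<bar> powr q)
      = (\<Sum>n<N. \<Sum>K\<in>cells. \<Sum>s\<in>E K. \<Sum>i\<in>Basis. dt * G n K s (ref_face K) i)"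
    by (simp add: sum_space_time_faces G_def discrete_grad_def mult_ac)
  also have "\<dots> \<le> (\<Sum>n<N. \<Sum>K\<in>cells. \<Sum>s\<in>E K. \<Sum>i\<in>Basis. dt * (\<Sum>s'\<in>E K. G n K s s' i))"
    using dt G_nonneg finite_faces ref_face_in_faces
    by (intro sum_mono mult_left_mono member_le_sum) auto
  also have "\<dots> = (\<Sum>n<N. \<Sum>K\<in>cells. \<Sum>i\<in>Basis. dt * (\<Sum>(s, s')\<in>E K \<times> E K. G n K s s' i))"
  proof (intro sum.cong refl)
    fix n K
    show "(\<Sum>s\<in>E K. \<Sum>i\<in>Basis. dt * (\<Sum>s'\<in>E K. G n K s s' i))
        = (\<Sum>i\<in>Basis. dt * (\<Sum>(s, s')\<in>E K \<times> E K. G n K s s' i))"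
      by (subst sum.swap) (simp add: sum.cartesian_product[symmetric] sum_distrib_left)
  qed
  also have "\<dots> = (\<Sum>n<N. \<Sum>i\<in>Basis. \<Sum>K\<in>cells. dt * (\<Sum>(s, s')\<in>E K \<times> E K. G n K s s' i))"
    by (intro sum.cong refl sum.swap)
  also have "\<dots> = (\<Sum>i\<in>Basis. \<Sum>n<N. dt * (\<Sum>K\<in>cells. \<Sum>(s, s')\<in>E K \<times> E K. G n K s s' i))"
    by (subst sum.swap) (simp add: sum_distrib_left)
  also have "\<dots> \<le> (\<Sum>i\<in>Basis. \<Sum>n\<in>{0..N}. dt * (\<Sum>K\<in>cells. \<Sum>(s, s')\<in>E K \<times> E K. G n K s s' i))"
    using dt G_nonneg by (intro sum_mono sum_mono2) (auto intro!: sum_nonneg mult_nonneg_nonneg)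
  also have "\<dots> = W1q_pow q N dt cells E volK h u"
    unfolding W1q_pow_def G_def ..
  finally show ?thesis .
qed

lemma L1norm_R01_le:
  assumes dt: "0 < dt" and P: "0 \<le> P" and M: "0 < M"
    and p: "p > 1" and q: "q > 1" and pq: "1/p + 1/q = 1"
    and F: "\<And>K. K \<in> cells \<Longrightarrow> card (E K) \<le> F"
    and rho: "\<And>K n. K \<in> cells \<Longrightarrow> n \<le> N \<Longrightarrow> 0 < rho K n \<and> rho K n \<le> M"
    and curvature: "\<And>K n. K \<in> cells \<Longrightarrow> n < N \<Longrightarrow> \<bar>phi'' (rt K n)\<bar> \<le> P"
  shows "L1norm N dt cells volK (R01 E volK volS nrm u phi'' rho rt)
    \<le> (real F * real DIM('a)) powr (1/p) * C_M * M powr ((2 * p - 1) / p) * P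
      * tBV N cells volK rho powr (1/p) * W1q_pow q N dt cells E volK h u powr (1/q) * dt powr (1/p)"
proof -
  let ?I = "space_time_faces N"
  let ?FD = "real F * real DIM('a)"
  let ?T = "tBV N cells volK rho"
  let ?W = "W1q_pow q N dt cells E volK h u"
  define A where "A = (\<Sum>(n, K, s, i)\<in>?I. dt * volK K * \<bar>rho K (Suc n) - rho K n\<bar> powr p)"
  define B where "B = (\<Sum>(n, K, s, i)\<in>?I. dt * volK K * \<bar>discrete_grad u n K s i\<bar> powr q)"
  have AB_nonneg: "0 \<le> A" "0 \<le> B"
    unfolding A_def B_def space_time_faces_def using dt less_imp_le[OF cell_measure_pos]
    by (auto intro!: sum_nonneg)
  have T_nonneg: "0 \<le> ?T"
    unfolding tBV_def using less_imp_le[OF cell_measure_pos] by (auto intro!: sum_nonneg)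
  have A_le: "A powr (1/p) \<le> (?FD * M powr (p - 1) * dt * ?T) powr (1/p)"
    unfolding A_def using AB_nonneg dt p F rho
    by (intro powr_mono2 sum_jump_powr_le) (auto simp: A_def)
  have B_le: "B powr (1/q) \<le> ?W powr (1/q)"
    unfolding B_def using AB_nonneg dt q
    by (intro powr_mono2 sum_discrete_grad_powr_le) (auto simp: B_def)
  have split: "(?FD * M powr (p - 1) * dt * ?T) powr (1/p)
      = ?FD powr (1/p) * M powr ((p - 1) / p) * dt powr (1/p) * ?T powr (1/p)"
    using M dt T_nonneg by (simp add: powr_mult powr_powr)
  have M_pow: "M * M powr ((p - 1) / p) = M powr ((2 * p - 1) / p)"
  proof -
    have "(2 * p - 1) / p = 1 + (p - 1) / p" using p by (simp add: field_simps)
    then show ?thesis using M by (simp add: powr_add)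
  qed
  have "L1norm N dt cells volK (R01 E volK volS nrm u phi'' rho rt) \<le> P * M * C_M * A powr (1/p) * B powr (1/q)"
    unfolding A_def B_def using dt P M p q pq curvature rho by (intro L1norm_R01_le_Holder) auto
  also have "\<dots> \<le> P * M * C_M * (?FD * M powr (p - 1) * dt * ?T) powr (1/p) * ?W powr (1/q)"
    using A_le B_le P M CM_pos by (intro mult_mono mult_left_mono) auto
  also have "\<dots> = ?FD powr (1/p) * C_M * (M * M powr ((p - 1) / p)) * P
      * ?T powr (1/p) * ?W powr (1/q) * dt powr (1/p)"
    unfolding split by (simp only: mult_ac)
  finally show ?thesis
    unfolding M_pow .
qed

(* The mean-value identity defining rt is not needed: convexity gives phi'' >= 0, so
   |phi'' (rt K n)| <= phi2inf M phi'' as soon as rt K n lies in [1/M, M]. *)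
lemma L1norm_R01_le_uniform:
  assumes dt: "0 < dt" and M: "1 < M"
    and p: "1 \<le> p" and q: "1 \<le> q" and pq: "1/p + 1/q = 1"
    and F: "\<And>K. K \<in> cells \<Longrightarrow> card (E K) \<le> F"
    and rho: "\<And>K n. K \<in> cells \<Longrightarrow> n \<le> N \<Longrightarrow> 0 < rho K n \<and> rho K n \<le> M \<and> 1 / rho K n \<le> M"
    and rt: "\<And>K n. K \<in> cells \<Longrightarrow> n < N \<Longrightarrow>
      min (rho K n) (rho K (Suc n)) \<le> rt K n \<and> rt K n \<le> max (rho K n) (rho K (Suc n))"
    and phi: "convex_on {0<..} phi" "\<And>x. 0 < x \<Longrightarrow> (phi has_real_derivative phi' x) (at x)"
      "\<And>x. 0 < x \<Longrightarrow> (phi' has_real_derivative phi'' x) (at x)" "continuous_on {0<..} phi''"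
  shows "L1norm N dt cells volK (R01 E volK volS nrm u phi'' rho rt)
    \<le> (real F * real DIM('a) + 1) * C_M * M powr ((2 * p - 1) / p) * phi2inf M phi''
      * tBV N cells volK rho powr (1/p) * W1q_pow q N dt cells E volK h u powr (1/q) * dt powr (1/p)"
proof -
  let ?FD = "real F * real DIM('a)"
  have pq_gt: "p > 1" "q > 1"
  proof -
    have "0 < 1/p" "0 < 1/q" using p q by auto
    then have "1/p < 1" "1/q < 1" using pq by linarith+
    then show "p > 1" "q > 1" using p q by (auto simp: divide_less_eq)
  qed
  have curvature_bound: "\<bar>phi'' x\<bar> \<le> phi2inf M phi''" if "x \<in> {1/M..M}" for x
    using phi M that by (intro abs_second_deriv_le_phi2inf[where f=phi and f'=phi']) auto
  have phi2inf_nonneg: "0 \<le> phi2inf M phi''"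
    using M curvature_bound[of 1] abs_ge_zero[of "phi'' 1"] by simp
  have rho_lower: "1/M \<le> rho K n" if "K \<in> cells" "n \<le> N" for K n
    using rho[OF that] M by (auto simp: divide_le_eq mult.commute)
  have rt_in: "rt K n \<in> {1/M..M}" if "K \<in> cells" "n < N" for K n
    using rt[OF that] rho[OF that(1), of n] rho[OF that(1), of "Suc n"]
      rho_lower[OF that(1), of n] rho_lower[OF that(1), of "Suc n"] that(2)
    by (auto simp: min_def max_def split: if_splits)
  have FD_le: "?FD powr (1/p) \<le> ?FD + 1"
  proof -
    have "?FD powr (1/p) \<le> (?FD + 1) powr (1/p)"
      using pq_gt by (intro powr_mono2) auto
    also have "\<dots> \<le> (?FD + 1) powr 1"
      using pq_gt by (intro powr_mono) auto
    finally show ?thesis by simp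
  qed
  have "L1norm N dt cells volK (R01 E volK volS nrm u phi'' rho rt)
      \<le> ?FD powr (1/p) * C_M * M powr ((2 * p - 1) / p) * phi2inf M phi''
        * tBV N cells volK rho powr (1/p) * W1q_pow q N dt cells E volK h u powr (1/q) * dt powr (1/p)"
    using dt pq pq_gt M F rho phi2inf_nonneg rt_in by (intro L1norm_R01_le curvature_bound) auto
  also have "\<dots> \<le> (?FD + 1) * C_M * M powr ((2 * p - 1) / p) * phi2inf M phi''
        * tBV N cells volK rho powr (1/p) * W1q_pow q N dt cells E volK h u powr (1/q) * dt powr (1/p)"
    using FD_le CM_pos phi2inf_nonneg by (intro mult_right_mono) simp_all
  finally show ?thesis .
qed

end

theorem lemma3p4:
  fixes F :: nat
  shows "\<exists>C>0. \<forall>(cells::nat set) (E::nat \<Rightarrow> nat set) (volK::nat \<Rightarrow> real) (volS::nat \<Rightarrow> real)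
      (h::nat \<Rightarrow> real) (nrm::nat \<Rightarrow> nat \<Rightarrow> 'a::euclidean_space) (u::nat \<Rightarrow> nat \<Rightarrow> 'a)
      (N::nat) (dt::real) (phi::real \<Rightarrow> real) (phi1::real \<Rightarrow> real) (phi2::real \<Rightarrow> real)
      (rho::nat \<Rightarrow> nat \<Rightarrow> real) (rt::nat \<Rightarrow> nat \<Rightarrow> real) (M::real) (p::real) (q::real).
    finite cells \<and> cells \<noteq> {} \<and>
    (\<forall>K\<in>cells. finite (E K) \<and> E K \<noteq> {} \<and> card (E K) \<le> F \<and> volK K > 0 \<and> h K > 0 \<and>
        (\<forall>s\<in>E K. volS s > 0 \<and> norm (nrm K s) = 1) \<and>
        (\<Sum>s\<in>E K. volS s *\<^sub>R nrm K s) = 0) \<and>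
    dt > 0 \<and>
    (\<forall>x>0. (phi has_real_derivative phi1 x) (at x)) \<and>
    (\<forall>x>0. (phi1 has_real_derivative phi2 x) (at x)) \<and>
    continuous_on {0<..} phi2 \<and> convex_on {0<..} phi \<and>
    M > 1 \<and>
    (\<forall>K\<in>cells. \<forall>n\<le>N. 0 < rho K n \<and> rho K n \<le> M \<and> 1 / rho K n \<le> M) \<and>
    (\<forall>K\<in>cells. \<forall>n<N. min (rho K n) (rho K (Suc n)) \<le> rt K n \<and>
        rt K n \<le> max (rho K n) (rho K (Suc n)) \<and>
        phi1 (rho K (Suc n)) - phi1 (rho K n) = phi2 (rt K n) * (rho K (Suc n) - rho K n)) \<and>
    p \<ge> 1 \<and> q \<ge> 1 \<and> 1 / p + 1 / q = 1
    \<longrightarrow>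
    L1norm N dt cells volK (R01 E volK volS nrm u phi2 rho rt)
      \<le> C * CM cells E volK volS h * M powr ((2 * p - 1) / p) * phi2inf M phi2
          * tBV N cells volK rho powr (1 / p)
          * W1q_pow q N dt cells E volK h u powr (1 / q)
          * dt powr (1 / p)"
proof (intro exI[of _ "real F * real DIM('a) + 1"] conjI allI impI, goal_cases)
  case 1
  show ?case by (simp add: add_nonneg_pos)
next
  case (2 cells E volK volS h nrm u N dt phi phi1 phi2 rho rt M p q)
  then interpret polytopal_mesh cells E volK volS h nrm
    by unfold_locales blast+
  show ?case
    by (rule L1norm_R01_le_uniform[where phi=phi and phi'=phi1]) (use 2 in blast)+
qed

end
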